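(* Assume (A1) and (A2), and let $\bar X\in\mathcal{X}_\star$, $\bar S\in\mathcal{S}_\star$, $G\in\mathbb{S}^n$ and $\epsilon\ge0$. (1) If $\|\mathcal{P}G\|_F\le\epsilon$ and $\langle G,\bar S\rangle=0$, then $|\langle G,S\rangle|\le\|S-\bar S\|_F\,\epsilon$ for all $S\in\mathcal{S}_\star$. (2) If $\|\mathcal{P}^\perp G\|_F\le\epsilon$ and $\langle G,\bar X\rangle=0$, then $|\langle G,X\rangle|\le\|X-\bar X\|_F\,\epsilon$ for all $X\in\mathcal{X}_\star$.
   Context: Notation: $\mathbb{S}^n$ is the space of real symmetric $n\times n$ matrices with $\langle A,B\rangle=\mathrm{tr}(AB)$ and Frobenius norm $\|\cdot\|_F$. SDP data $C,A_1,\dots,A_m\in\mathbb{S}^n$, $b\in\mathbb{R}^m$ define $\mathcal{A}X:=(\langle A_i,X\rangle)_i$ and $\mathcal{A}^*y:=\sum_iy_iA_i$. A KKT point is $(X,y,S)$ with $\mathcal{A}X=b$, $\mathcal{A}^*y+S=C$, $X,S\succeq0$, $\langle X,S\rangle=0$. $\mathcal{X}_\star$, $\mathcal{S}_\star$ are the sets of $X$, resp. $S$, in KKT points. (A1) $\mathcal{A}$ is surjective. (A2) Some KKT point $(X_{sc},y_{sc},S_{sc})$ has $\mathrm{rank}X_{sc}+\mathrm{rank}S_{sc}=n$. $\mathcal{P}:=\mathcal{A}^*(\mathcal{A}\mathcal{A}^* )^{-1}\mathcal{A}$ and $\mathcal{P}^\perp:=\mathrm{Id}-\mathcal{P}$.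 *)

theory Defs
  imports "HOL-Analysis.Analysis"
begin

definition sym_mat :: "real^'n^'n \<Rightarrow> bool" where
  "sym_mat A \<longleftrightarrow> transpose A = A"

definition sinner :: "real^'n^'n \<Rightarrow> real^'n^'n \<Rightarrow> real" where
  "sinner A B = trace (A ** B)"

definition frob :: "real^'n^'n \<Rightarrow> real" where
  "frob A = sqrt (sinner A A)"

definition psd :: "real^'n^'n \<Rightarrow> bool" where
  "psd A \<longleftrightarrow> sym_mat A \<and> (\<forall>x. 0 \<le> x \<bullet> (A *v x))"

definition opA :: "('m::finite \<Rightarrow> real^'n^'n) \<Rightarrow> real^'n^'n \<Rightarrow> real^'m" where
  "opA As X = (\<chi> i. sinner (As i) X)"

definition opAadj :: "('m::finite \<Rightarrow> real^'n^'n) \<Rightarrow> real^'m \<Rightarrow> real^'n^'n" where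
  "opAadj As y = (\<Sum>i\<in>UNIV. (y $ i) *\<^sub>R As i)"

definition gramA :: "('m::finite \<Rightarrow> real^'n^'n) \<Rightarrow> real^'m^'m" where
  "gramA As = (\<chi> i j. sinner (As i) (As j))"

definition projP :: "('m::finite \<Rightarrow> real^'n^'n) \<Rightarrow> real^'n^'n \<Rightarrow> real^'n^'n" where
  "projP As G = opAadj As (matrix_inv (gramA As) *v opA As G)"

definition projPperp :: "('m::finite \<Rightarrow> real^'n^'n) \<Rightarrow> real^'n^'n \<Rightarrow> real^'n^'n" where
  "projPperp As G = G - projP As G"

definition KKT :: "real^'n^'n \<Rightarrow> ('m::finite \<Rightarrow> real^'n^'n) \<Rightarrow> real^'m
      \<Rightarrow> real^'n^'n \<Rightarrow> real^'m \<Rightarrow> real^'n^'n \<Rightarrow> bool" where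
  "KKT C As b X y S \<longleftrightarrow> opA As X = b \<and> opAadj As y + S = C \<and> psd X \<and> psd S
      \<and> sinner X S = 0"

definition Xstar where "Xstar C As b = {X. \<exists>y S. KKT C As b X y S}"
definition Sstar where "Sstar C As b = {S. \<exists>X y. KKT C As b X y S}"

definition A1 :: "('m::finite \<Rightarrow> real^'n^'n) \<Rightarrow> bool" where
  "A1 As \<longleftrightarrow> (\<forall>v. \<exists>X. sym_mat X \<and> opA As X = v)"

definition A2 :: "real^'n^'n \<Rightarrow> ('m::finite \<Rightarrow> real^'n^'n) \<Rightarrow> real^'m \<Rightarrow> bool" where
  "A2 C As b \<longleftrightarrow> (\<exists>X y S. KKT C As b X y S \<and> rank X + rank S = CARD('n))"

end

theory Submission
  imports Defs
begin

text \<open>Two dual optimal slacks satisfy \<open>\<A>\<^sup>*y + S = C\<close> for the same \<open>C\<close>, so their difference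
  lies in the range of \<open>\<A>\<^sup>*\<close>; two primal optimal solutions satisfy \<open>\<A>X = b\<close>, so their
  difference lies in the kernel of \<open>\<A>\<close>. By (A1) the Gram matrix \<open>\<A>\<A>\<^sup>*\<close> is invertible and
  \<open>\<P>\<close> is the orthogonal projection onto the range of \<open>\<A>\<^sup>*\<close>; hence on that range the pairing
  with \<open>G\<close> equals the pairing with \<open>\<P>G\<close>, and on the kernel of \<open>\<A>\<close> it equals the pairing with
  \<open>\<P>\<^sup>\<bottom>G\<close>. Using \<open>\<langle>G,S\<^sub>0\<rangle> = 0\<close> we get \<open>\<langle>G,S\<rangle> = \<langle>\<P>G,S - S\<^sub>0\<rangle>\<close>, and Cauchy-Schwarz
  concludes; the primal case is symmetric.\<close>

lemma sym_mat_iff: "sym_mat A \<longleftrightarrow> (\<forall>i j. A$i$j = A$j$i)"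
  unfolding sym_mat_def transpose_def vec_eq_iff by auto

lemma sinner_eq_inner_if_sym_right: "sym_mat B \<Longrightarrow> sinner A B = A \<bullet> B"
  by (simp add: sym_mat_iff sinner_def trace_def matrix_matrix_mult_def inner_vec_def)

lemma sinner_eq_inner_if_sym_left:
  assumes "sym_mat A"
  shows "sinner A B = A \<bullet> B"
  using sinner_eq_inner_if_sym_right[OF assms, of B] trace_mul_sym[of A B]
  by (simp add: sinner_def inner_commute)

lemma frob_eq_norm: "sym_mat A \<Longrightarrow> frob A = norm A"
  by (simp add: frob_def norm_eq_sqrt_inner sinner_eq_inner_if_sym_right)

lemma sym_mat_diff: "sym_mat A \<Longrightarrow> sym_mat B \<Longrightarrow> sym_mat (A - B)"
  by (simp add: sym_mat_iff)

lemma sym_mat_opAadj: "\<forall>i. sym_mat (As i) \<Longrightarrow> sym_mat (opAadj As w)"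
  by (simp add: sym_mat_iff opAadj_def sum_component)

lemma sym_mat_projP: "\<forall>i. sym_mat (As i) \<Longrightarrow> sym_mat (projP As G)"
  unfolding projP_def by (rule sym_mat_opAadj)

lemma sym_mat_projPperp: "\<forall>i. sym_mat (As i) \<Longrightarrow> sym_mat G \<Longrightarrow> sym_mat (projPperp As G)"
  unfolding projPperp_def by (rule sym_mat_diff[OF _ sym_mat_projP])

lemma opA_eq_inner: "\<forall>i. sym_mat (As i) \<Longrightarrow> opA As X = (\<chi> i. As i \<bullet> X)"
  by (simp add: opA_def sinner_eq_inner_if_sym_left)

lemma opA_diff: "\<forall>i. sym_mat (As i) \<Longrightarrow> opA As (X - Y) = opA As X - opA As Y"
  by (simp add: opA_eq_inner vec_eq_iff inner_diff_right)

lemma inner_opAadj: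
  assumes "\<forall>i. sym_mat (As i)"
  shows "X \<bullet> opAadj As w = w \<bullet> opA As X"
proof -
  have "X \<bullet> opAadj As w = (\<Sum>i\<in>UNIV. w$i * (As i \<bullet> X))"
    by (simp add: opAadj_def inner_sum_right inner_commute)
  with assms show ?thesis by (simp add: opA_eq_inner inner_vec_def)
qed

lemma opA_opAadj:
  assumes "\<forall>i. sym_mat (As i)"
  shows "opA As (opAadj As w) = gramA As *v w"
proof -
  have "As i \<bullet> opAadj As w = (\<Sum>j\<in>UNIV. (As i \<bullet> As j) * w$j)" for i
    by (simp add: opAadj_def inner_sum_right mult.commute)
  with assms show ?thesis
    by (simp add: opA_eq_inner gramA_def sinner_eq_inner_if_sym_left matrix_vector_mult_def
        vec_eq_iff)
qed

lemma invertible_gramA: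
  assumes sym: "\<forall>i. sym_mat (As i)" and surj: "A1 As"
  shows "invertible (gramA As)"
proof -
  have "w = 0" if "gramA As *v w = 0" for w
  proof -
    have "opAadj As w \<bullet> opAadj As w = w \<bullet> (gramA As *v w)"
      by (simp only: inner_opAadj[OF sym] opA_opAadj[OF sym])
    with that have "opAadj As w = 0" by simp
    obtain X where "opA As X = w" using surj unfolding A1_def by blast
    then have "w \<bullet> w = X \<bullet> opAadj As w" by (simp only: inner_opAadj[OF sym])
    with \<open>opAadj As w = 0\<close> show ?thesis by simp
  qed
  then show ?thesis
    unfolding invertible_left_inverse matrix_left_invertible_ker by blast
qed

lemma opA_projP:
  assumes "\<forall>i. sym_mat (As i)" and "A1 As"
  shows "opA As (projP As G) = opA As G"
proof -
  have "gramA As ** matrix_inv (gramA As) = mat 1"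
    using invertible_gramA[OF assms] unfolding invertible_def matrix_inv_def
    by (rule someI_ex[THEN conjunct1])
  then show ?thesis
    unfolding projP_def opA_opAadj[OF assms(1)]
    by (metis matrix_vector_mul_assoc matrix_vector_mul_lid)
qed

lemma inner_opAadj_projP:
  assumes "\<forall>i. sym_mat (As i)" and "A1 As"
  shows "G \<bullet> opAadj As w = projP As G \<bullet> opAadj As w"
  using inner_opAadj[OF assms(1)] opA_projP[OF assms] by simp

lemma inner_projPperp_if_opA_eq_0:
  assumes "\<forall>i. sym_mat (As i)" and "opA As D = 0"
  shows "G \<bullet> D = projPperp As G \<bullet> D"
proof -
  have "projP As G \<bullet> D = 0"
    using assms inner_opAadj[OF assms(1)] by (simp add: projP_def inner_commute)
  then show ?thesis by (simp add: projPperp_def inner_diff_left)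
qed

lemma Sstar_diff_eq_opAadj:
  assumes "S \<in> Sstar C As b" and "S' \<in> Sstar C As b"
  obtains w where "S - S' = opAadj As w"
proof -
  obtain X y X' y' where "KKT C As b X y S" "KKT C As b X' y' S'"
    using assms unfolding Sstar_def by blast
  then have "opAadj As y + S = opAadj As y' + S'" by (simp add: KKT_def)
  then have "S - S' = opAadj As (y' - y)"
    by (simp add: opAadj_def scaleR_diff_left sum_subtractf algebra_simps)
  then show thesis by (rule that)
qed

lemma opA_Xstar_diff:
  assumes "\<forall>i. sym_mat (As i)" and "X \<in> Xstar C As b" and "X' \<in> Xstar C As b"
  shows "opA As (X - X') = 0"
  using assms unfolding Xstar_def KKT_def by (auto simp: opA_diff)

lemma sym_mat_Sstar: "S \<in> Sstar C As b \<Longrightarrow> sym_mat S"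
  by (auto simp: Sstar_def KKT_def psd_def)

lemma sym_mat_Xstar: "X \<in> Xstar C As b \<Longrightarrow> sym_mat X"
  by (auto simp: Xstar_def KKT_def psd_def)

lemma abs_inner_le_frob_mult:
  assumes "sym_mat H" and "sym_mat D" and "frob H \<le> \<epsilon>"
  shows "\<bar>H \<bullet> D\<bar> \<le> frob D * \<epsilon>"
proof -
  have "\<bar>H \<bullet> D\<bar> \<le> norm H * norm D" by (rule Cauchy_Schwarz_ineq2)
  also have "\<dots> \<le> \<epsilon> * norm D"
    using assms by (simp add: frob_eq_norm mult_right_mono)
  finally show ?thesis using assms(2) by (simp add: frob_eq_norm mult.commute)
qed

lemma abs_sinner_Sstar_le:
  assumes sym: "\<forall>i. sym_mat (As i)" and "A1 As" and "sym_mat G"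
    and "S \<in> Sstar C As b" and "S\<^sub>0 \<in> Sstar C As b"
    and "frob (projP As G) \<le> \<epsilon>" and "sinner G S\<^sub>0 = 0"
  shows "\<bar>sinner G S\<bar> \<le> frob (S - S\<^sub>0) * \<epsilon>"
proof -
  obtain w where w: "S - S\<^sub>0 = opAadj As w"
    using assms(4,5) by (rule Sstar_diff_eq_opAadj)
  have "sinner G S = G \<bullet> (S - S\<^sub>0)"
    using assms(3,7) by (simp add: sinner_eq_inner_if_sym_left inner_diff_right)
  also have "\<dots> = projP As G \<bullet> (S - S\<^sub>0)"
    unfolding w by (rule inner_opAadj_projP[OF sym \<open>A1 As\<close>])
  finally show ?thesis
    using assms by (simp add: abs_inner_le_frob_mult sym_mat_projP sym_mat_diff sym_mat_Sstar)
qed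

lemma abs_sinner_Xstar_le:
  assumes sym: "\<forall>i. sym_mat (As i)" and "sym_mat G"
    and "X \<in> Xstar C As b" and "X\<^sub>0 \<in> Xstar C As b"
    and "frob (projPperp As G) \<le> \<epsilon>" and "sinner G X\<^sub>0 = 0"
  shows "\<bar>sinner G X\<bar> \<le> frob (X - X\<^sub>0) * \<epsilon>"
proof -
  have "sinner G X = G \<bullet> (X - X\<^sub>0)"
    using assms(2,6) by (simp add: sinner_eq_inner_if_sym_left inner_diff_right)
  also have "\<dots> = projPperp As G \<bullet> (X - X\<^sub>0)"
    using sym opA_Xstar_diff[OF sym assms(3,4)] by (rule inner_projPperp_if_opA_eq_0)
  finally show ?thesis
    using assms by (simp add: abs_inner_le_frob_mult sym_mat_projPperp sym_mat_diff sym_mat_Xstar)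
qed

theorem lemma4p3:
  fixes C :: "real^'n^'n" and As :: "'m::finite \<Rightarrow> real^'n^'n" and b :: "real^'m"
    and Xb Sb G :: "real^'n^'n" and \<epsilon> :: real
  assumes "sym_mat C" and "\<forall>i. sym_mat (As i)"
    and "A1 As" and "A2 C As b"
    and "Xb \<in> Xstar C As b" and "Sb \<in> Sstar C As b"
    and "sym_mat G" and "\<epsilon> \<ge> 0"
  shows "(frob (projP As G) \<le> \<epsilon> \<and> sinner G Sb = 0 \<longrightarrow>
           (\<forall>S\<in>Sstar C As b. \<bar>sinner G S\<bar> \<le> frob (S - Sb) * \<epsilon>))
       \<and> (frob (projPperp As G) \<le> \<epsilon> \<and> sinner G Xb = 0 \<longrightarrow>
           (\<forall>X\<in>Xstar C As b. \<bar>sinner G X\<bar> \<le> frob (X - Xb) * \<epsilon>))"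
  using abs_sinner_Sstar_le[OF assms(2,3,7) _ assms(6)]
    abs_sinner_Xstar_le[OF assms(2,7) _ assms(5)]
  by blast

end
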